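(* Let $0<\tau_1\le\dots\le\tau_n$, set $\tau_{n+1}=\infty$, and let $S\ge\frac14$. Define $$j_1^*=\inf\Big\{m\in[n]: S\Big(\sum_{i=1}^m\frac1{\tau_i}\Big)^{-1}<\tau_{m+1}\Big\},\qquad t_1=S\Big(\sum_{i=1}^{j_1^*}\frac1{\tau_i}\Big)^{-1},$$ $$t_2=\min_{j\in[n]}\Big[\Big(\sum_{i=1}^j\frac1{\tau_i}\Big)^{-1}(S+j)\Big].$$ Then $t_1\le t_2\le6t_1$.
   Context: $[n]=\{1,\dots,n\}$. The set defining $j_1^*$ is nonempty since $\tau_{n+1}=\infty$. *)

theory Defs
  imports "HOL-Analysis.Analysis"
begin

definition tau_ext :: "(nat \<Rightarrow> real) \<Rightarrow> nat \<Rightarrow> nat \<Rightarrow> ereal" where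
  "tau_ext \<tau> n m = (if m = n + 1 then \<infinity> else ereal (\<tau> m))"

end

theory Submission
  imports Defs
begin

text \<open>Write \<open>H m = \<Sum>i=1..m. 1/\<tau> i\<close>, so \<open>t\<^sub>1 = S / H j\<^sub>1\<close> where \<open>j\<^sub>1\<close> is the first index
  with \<open>S / H j\<^sub>1 < \<tau> (j\<^sub>1+1)\<close>. All later \<open>\<tau> i\<close> exceed \<open>S / H j\<^sub>1\<close>, so each later term of
  \<open>H\<close> is below \<open>H j\<^sub>1 / S\<close>; this gives \<open>S H j \<le> (S + j) H j\<^sub>1\<close> for every \<open>j\<close>, i.e. \<open>t\<^sub>1 \<le> t\<^sub>2\<close>.
  Conversely, the crossing fails at \<open>j\<^sub>1 - 1\<close>, while \<open>H (j\<^sub>1-1) \<ge> (j\<^sub>1-1) / \<tau> j\<^sub>1\<close> by monotonicity;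
  together they give \<open>j\<^sub>1 \<le> S + 1\<close>, so the term \<open>j = j\<^sub>1\<close> of \<open>t\<^sub>2\<close> is at most
  \<open>(2S + 1) / H j\<^sub>1 \<le> 6 t\<^sub>1\<close> because \<open>S \<ge> 1/4\<close>.\<close>

lemma mono_on_atLeastAtMost_SucI:
  fixes f :: "nat \<Rightarrow> 'a :: order"
  assumes "\<forall>i\<in>{m..<n}. f i \<le> f (Suc i)"
  shows "mono_on {m..n} f"
proof (rule mono_onI)
  show "f i \<le> f k" if "i \<in> {m..n}" "k \<in> {m..n}" "i \<le> k" for i k
    by (rule lift_Suc_mono_le_ivl[of "{m..<n}"]) (use assms that in auto)
qed

definition recip_sum :: "(nat \<Rightarrow> real) \<Rightarrow> nat \<Rightarrow> real" where
  "recip_sum \<tau> m = (\<Sum>i=1..m. 1 / \<tau> i)"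

lemma recip_sum_pos:
  assumes "1 \<le> m" "\<forall>i\<in>{1..m}. 0 < \<tau> i"
  shows "0 < recip_sum \<tau> m"
  unfolding recip_sum_def using assms by (intro sum_pos) auto

lemma recip_sum_mono:
  assumes "j \<le> k" "\<forall>i\<in>{1..k}. 0 < \<tau> i"
  shows "recip_sum \<tau> j \<le> recip_sum \<tau> k"
  unfolding recip_sum_def using assms by (intro sum_mono2) (auto intro: less_imp_le)

lemma recip_sum_le_add:
  assumes "k \<le> j" "0 < c" "\<forall>i\<in>{k<..j}. c \<le> \<tau> i"
  shows "recip_sum \<tau> j \<le> recip_sum \<tau> k + real (j - k) / c"
proof -
  have "recip_sum \<tau> j = recip_sum \<tau> k + (\<Sum>i\<in>{k<..j}. 1 / \<tau> i)"
    unfolding recip_sum_def using \<open>k \<le> j\<close> sum.ub_add_nat[of 1 k "\<lambda>i. 1 / \<tau> i" "j - k"]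
    by (simp add: atLeastSucAtMost_greaterThanAtMost)
  also have "(\<Sum>i\<in>{k<..j}. 1 / \<tau> i) \<le> (\<Sum>i\<in>{k<..j}. 1 / c)"
    using assms(2,3) by (intro sum_mono) (simp add: frac_le)
  finally show ?thesis by simp
qed

lemma le_mult_recip_sum:
  assumes "mono_on {1..Suc i} \<tau>" "\<forall>x\<in>{1..Suc i}. 0 < \<tau> x"
  shows "real i \<le> \<tau> (Suc i) * recip_sum \<tau> i"
proof -
  have "(\<Sum>k=1..i. 1 / \<tau> (Suc i)) \<le> recip_sum \<tau> i"
    unfolding recip_sum_def using assms by (intro sum_mono frac_le) (auto simp: mono_on_def)
  then show ?thesis
    using assms(2) by (simp add: field_simps)
qed

lemma crossing_ratio_le:
  assumes mono: "mono_on {1..n} \<tau>" and pos: "\<forall>i\<in>{1..n}. 0 < \<tau> i" and "0 < S"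
    and j1: "j1 \<in> {1..n}" and j: "j \<in> {1..n}"
    and crossing: "j1 < n \<Longrightarrow> S / recip_sum \<tau> j1 < \<tau> (Suc j1)"
  shows "S / recip_sum \<tau> j1 \<le> (S + real j) / recip_sum \<tau> j"
proof -
  have H1: "0 < recip_sum \<tau> j1" and H: "0 < recip_sum \<tau> j"
    using j1 j pos by (auto intro!: recip_sum_pos)
  have "S * recip_sum \<tau> j \<le> (S + real j) * recip_sum \<tau> j1"
  proof (cases "j \<le> j1")
    case True
    then have "S * recip_sum \<tau> j \<le> S * recip_sum \<tau> j1"
      using j1 pos \<open>0 < S\<close> by (intro mult_left_mono recip_sum_mono) auto
    also have "\<dots> \<le> (S + real j) * recip_sum \<tau> j1"
      using H1 by (intro mult_right_mono) auto
    finally show ?thesis .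
  next
    case False
    have "S / recip_sum \<tau> j1 \<le> \<tau> i" if "i \<in> {j1<..j}" for i
      using crossing mono_onD[OF mono, of "Suc j1" i] that j j1 False by auto
    then have "recip_sum \<tau> j \<le> recip_sum \<tau> j1 + real (j - j1) / (S / recip_sum \<tau> j1)"
      using False \<open>0 < S\<close> H1 by (intro recip_sum_le_add) auto
    then have "S * recip_sum \<tau> j \<le> (S + real (j - j1)) * recip_sum \<tau> j1"
      using \<open>0 < S\<close> H1 by (simp add: field_simps)
    also have "\<dots> \<le> (S + real j) * recip_sum \<tau> j1"
      using H1 by (intro mult_right_mono) auto
    finally show ?thesis .
  qed
  with H1 H show ?thesis
    by (simp add: field_simps)
qed

lemma first_crossing_le:
  assumes mono: "mono_on {1..j} \<tau>" and pos: "\<forall>i\<in>{1..j}. 0 < \<tau> i" and "1 \<le> j" "0 \<le> S"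
    and no_crossing: "\<And>m. 1 \<le> m \<Longrightarrow> m < j \<Longrightarrow> \<tau> (Suc m) \<le> S / recip_sum \<tau> m"
  shows "real j \<le> S + 1"
proof (cases "j \<ge> 2")
  case True
  then obtain i where j: "j = Suc i" and "1 \<le> i"
    by (cases j) auto
  have "0 < recip_sum \<tau> i"
    using pos j \<open>1 \<le> i\<close> by (intro recip_sum_pos) auto
  with no_crossing[of i] j \<open>1 \<le> i\<close> have "\<tau> (Suc i) * recip_sum \<tau> i \<le> S"
    by (simp add: field_simps)
  with le_mult_recip_sum[of i \<tau>] mono pos j show ?thesis
    by simp
qed (use assms in auto)

lemma tau_ext_crossing_set_eq:
  "{m \<in> {1..n}. ereal (S * inverse (\<Sum>i=1..m. 1 / \<tau> i)) < tau_ext \<tau> n (m + 1)}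
    = {m \<in> {1..n}. m < n \<longrightarrow> S / recip_sum \<tau> m < \<tau> (Suc m)}"
  by (auto simp: tau_ext_def recip_sum_def divide_inverse)

theorem mainTheorem14:
  fixes \<tau> :: "nat \<Rightarrow> real" and n :: nat and S :: real
  assumes n: "n \<ge> 1"
    and pos: "0 < \<tau> 1"
    and mono: "\<forall>i\<in>{1..<n}. \<tau> i \<le> \<tau> (Suc i)"
    and S: "S \<ge> 1/4"
  defines "j1 \<equiv> Inf {m \<in> {1..n}. ereal (S * inverse (\<Sum>i=1..m. 1 / \<tau> i)) < tau_ext \<tau> n (m + 1)}"
  defines "t1 \<equiv> S * inverse (\<Sum>i=1..j1. 1 / \<tau> i)"
  defines "t2 \<equiv> Min ((\<lambda>j. inverse (\<Sum>i=1..j. 1 / \<tau> i) * (S + real j)) ` {1..n})"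
  shows "t1 \<le> t2 \<and> t2 \<le> 6 * t1"
proof -
  define f where "f j = (S + real j) / recip_sum \<tau> j" for j
  define A where "A = {m \<in> {1..n}. m < n \<longrightarrow> S / recip_sum \<tau> m < \<tau> (Suc m)}"
  have mono_\<tau>: "mono_on {1..n} \<tau>"
    using mono by (rule mono_on_atLeastAtMost_SucI)
  have pos_\<tau>: "\<forall>i\<in>{1..n}. 0 < \<tau> i"
    using pos mono_onD[OF mono_\<tau>, of 1] n by (auto intro: less_le_trans)
  have "n \<in> A" using n by (simp add: A_def)
  then have j1: "j1 \<in> A" and least: "\<And>m. m \<in> A \<Longrightarrow> j1 \<le> m"
    unfolding j1_def tau_ext_crossing_set_eq A_def[symmetric]
    by (auto intro: Inf_nat_def1 cInf_lower)
  have t1: "t1 = S / recip_sum \<tau> j1" and t2: "t2 = Min (f ` {1..n})"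
    unfolding t1_def t2_def f_def recip_sum_def by (simp_all add: divide_inverse mult.commute)
  have "t1 \<le> f j" if "j \<in> {1..n}" for j
    unfolding t1 f_def using j1 S
    by (intro crossing_ratio_le[OF mono_\<tau> pos_\<tau> _ _ that]) (auto simp: A_def)
  then have "t1 \<le> t2"
    unfolding t2 using n by (subst Min_ge_iff) auto
  have "real j1 \<le> S + 1"
    using j1 least pos_\<tau> S mono_on_subset[OF mono_\<tau>, of "{1..j1}"]
    by (intro first_crossing_le) (force simp: A_def not_less)+
  then have "f j1 \<le> 6 * t1"
    using j1 pos_\<tau> S unfolding f_def t1 A_def times_divide_eq_right
    by (intro divide_right_mono less_imp_le[OF recip_sum_pos]) auto
  moreover have "t2 \<le> f j1"
    using j1 unfolding t2 A_def by (intro Min_le) auto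
  ultimately show ?thesis
    using \<open>t1 \<le> t2\<close> by simp
qed

end
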